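(* Consider three $K$-tier open access networks as described in the context, identical in point processes $\Phi_k$, powers $P_k$, target SIRs $\beta_k$ and path loss exponent: (i) an SU-BF network in which tier $k$ has $M_k>1$ antennas and $\Psi_k=1$ (so $\Delta_k=M_k$); (ii) a SISO network with $\Delta'_k=\Psi'_k=1$ for all $k$; (iii) a full SDMA network in which tier $k$ has $M''_k>1$ antennas and $\Psi''_k=M''_k$ (so $\Delta''_k=1$), where $M''_k$ need not equal $M_k$. Then the coverage probability of (i) is greater than or equal to that of (ii), which is greater than or equal to that of (iii).
   Context: Downlink $K$-tier cellular network with tiers indexed by $\mathcal{K}=\{1,\dots,K\}$. Tier-$k$ base stations (BSs) are located at the points of a stationary point process $\Phi_k\subset\mathbb{R}^2$ (not necessarily independent across tiers), transmit with per-user power $P_k>0$ and have target SIR $\beta_k>0$; each tier has positive integer channel parameters $\Delta_k,\Psi_k$ (with $M_k$ antennas and $\Psi_k\le M_k$ served users, $\Delta_k=M_k-\Psi_k+1$). $\alpha$ is the path loss exponent; a typical user is at the origin. Each BS at $x\in\Phi_k$ carries channel-power marks $h_{kx}\sim\Gamma(\Delta_k,1)$ (desired link) and $g_{kx}\sim\Gamma(\Psi_k,1)$ (interfering link), all mutually independent and independent of the point processes. $\mathrm{SIR}(x_k)=\dfrac{P_kh_{kx_k}\|x_k\|^{-\alpha}}{\sum_{j\in\mathcal{K}}\sum_{y\in\Phi_j\setminus\{x_k\}}P_jg_{jy}\|y\|^{-\alpha}}$ for $x_k\in\Phi_k$; the open access coverage probability is $\mathbb{P}\big(\bigcup_{k\in\mathcal{K}}\{\max_{x_k\in\Phi_k}\mathrm{SIR}(x_k)>\beta_k\}\big)$.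 $\Gamma(a,1)$ is the Gamma distribution with shape $a$, scale $1$. *)

theory Defs
  imports "HOL-Probability.Probability"
begin

type_synonym loc = "real^2"

text \<open>Gamma(a,1) density for a positive integer shape a (= Erlang density, rate 1).\<close>
definition gamma_density :: "nat \<Rightarrow> real \<Rightarrow> ennreal" where
  "gamma_density a x = ennreal (erlang_density (a - 1) 1 x)"

text \<open>Point processes are given by enumerations: tier k has the points
  pt k i w for the indices i with enat i < N k w (N k w possibly infinite).\<close>
definition Phi :: "(nat \<Rightarrow> nat \<Rightarrow> 'a \<Rightarrow> loc) \<Rightarrow> (nat \<Rightarrow> 'a \<Rightarrow> enat) \<Rightarrow> nat \<Rightarrow> 'a \<Rightarrow> loc set" where
  "Phi pt N k w = {pt k i w | i. enat i < N k w}"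

definition ecount :: "loc set \<Rightarrow> loc set \<Rightarrow> enat" where
  "ecount S B = (if finite (S \<inter> B) then enat (card (S \<inter> B)) else \<infinity>)"

definition cfg_space :: "loc set measure" where
  "cfg_space = sigma UNIV {{S. ecount S B = m} | B m. B \<in> sets borel \<and> bounded B}"

definition stationary :: "'a measure \<Rightarrow> ('a \<Rightarrow> loc set) \<Rightarrow> bool" where
  "stationary M X \<longleftrightarrow> (\<forall>v. distr M cfg_space X = distr M cfg_space (\<lambda>w. (\<lambda>y. y + v) ` X w))"

definition point_processes :: "'a measure \<Rightarrow> nat \<Rightarrow> (nat \<Rightarrow> nat \<Rightarrow> 'a \<Rightarrow> loc) \<Rightarrow> (nat \<Rightarrow> 'a \<Rightarrow> enat) \<Rightarrow> bool" where
  "point_processes M K pt N \<longleftrightarrow>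
     (\<forall>k\<in>{1..K}. \<forall>i. pt k i \<in> borel_measurable M) \<and>
     (\<forall>k\<in>{1..K}. N k \<in> measurable M (count_space UNIV)) \<and>
     (\<forall>k\<in>{1..K}. \<forall>w\<in>space M. \<forall>i j. enat i < N k w \<and> enat j < N k w \<and> pt k i w = pt k j w \<longrightarrow> i = j) \<and>
     (\<forall>k\<in>{1..K}. \<forall>w\<in>space M. \<forall>r::real. finite {i. enat i < N k w \<and> norm (pt k i w) \<le> r}) \<and>
     (\<forall>k\<in>{1..K}. stationary M (Phi pt N k))"

definition proc_space :: "nat \<Rightarrow> ((nat \<Rightarrow> nat \<Rightarrow> loc) \<times> (nat \<Rightarrow> enat)) measure" where
  "proc_space K = PiM {1..K} (\<lambda>_. PiM UNIV (\<lambda>_. borel)) \<Otimes>\<^sub>M PiM {1..K} (\<lambda>_. count_space UNIV)"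

definition proc :: "nat \<Rightarrow> (nat \<Rightarrow> nat \<Rightarrow> 'a \<Rightarrow> loc) \<Rightarrow> (nat \<Rightarrow> 'a \<Rightarrow> enat) \<Rightarrow> 'a \<Rightarrow> (nat \<Rightarrow> nat \<Rightarrow> loc) \<times> (nat \<Rightarrow> enat)" where
  "proc K pt N w = ((\<lambda>k\<in>{1..K}. \<lambda>i. pt k i w), (\<lambda>k\<in>{1..K}. N k w))"

definition mark_family :: "(nat \<Rightarrow> nat \<Rightarrow> 'a \<Rightarrow> real) \<Rightarrow> (nat \<Rightarrow> nat \<Rightarrow> 'a \<Rightarrow> real) \<Rightarrow> nat \<times> nat \<times> bool \<Rightarrow> 'a \<Rightarrow> real" where
  "mark_family h g = (\<lambda>(k,i,b). if b then h k i else g k i)"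

definition mark_index :: "nat \<Rightarrow> (nat \<times> nat \<times> bool) set" where
  "mark_index K = {1..K} \<times> UNIV \<times> UNIV"

text \<open>Marks for channel parameters Delta, Psi: h k i ~ Gamma(Delta k,1), g k i ~ Gamma(Psi k,1),
  all mutually independent and independent of the point processes (index None = the whole
  point process of tiers 1..K, index Some m = the single mark m).\<close>
definition marks :: "'a measure \<Rightarrow> nat \<Rightarrow> (nat \<Rightarrow> nat \<Rightarrow> 'a \<Rightarrow> loc) \<Rightarrow> (nat \<Rightarrow> 'a \<Rightarrow> enat) \<Rightarrow>
    (nat \<Rightarrow> nat) \<Rightarrow> (nat \<Rightarrow> nat) \<Rightarrow> (nat \<Rightarrow> nat \<Rightarrow> 'a \<Rightarrow> real) \<Rightarrow> (nat \<Rightarrow> nat \<Rightarrow> 'a \<Rightarrow> real) \<Rightarrow> bool" where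
  "marks M K pt N Delta Psi h g \<longleftrightarrow>
     (\<forall>k\<in>{1..K}. \<forall>i. distributed M lborel (h k i) (gamma_density (Delta k))) \<and>
     (\<forall>k\<in>{1..K}. \<forall>i. distributed M lborel (g k i) (gamma_density (Psi k))) \<and>
     prob_space.indep_sets M
        (\<lambda>j. case j of None \<Rightarrow> sets (vimage_algebra (space M) (proc K pt N) (proc_space K))
                      | Some m \<Rightarrow> sets (vimage_algebra (space M) (mark_family h g m) borel))
        (insert None (Some ` mark_index K))"

text \<open>Aggregate interference at the origin seen from the BS (k,i): all BSs of all tiers whose
  location differs from that of (k,i) (literal reading of y in Phi_j minus {x_k}).\<close>
definition interference :: "nat \<Rightarrow> (nat \<Rightarrow> real) \<Rightarrow> real \<Rightarrow> (nat \<Rightarrow> nat \<Rightarrow> 'a \<Rightarrow> loc) \<Rightarrow> (nat \<Rightarrow> 'a \<Rightarrow> enat) \<Rightarrow>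
    (nat \<Rightarrow> nat \<Rightarrow> 'a \<Rightarrow> real) \<Rightarrow> nat \<Rightarrow> nat \<Rightarrow> 'a \<Rightarrow> ennreal" where
  "interference K P \<alpha> pt N g k i w =
     (\<Sum>j\<in>{1..K}. \<Sum>l. if enat l < N j w \<and> pt j l w \<noteq> pt k i w
        then ennreal (P j * g j l w * norm (pt j l w) powr (- \<alpha>)) else 0)"

text \<open>SIR(x) > beta, written without division: beta * I < S (so I = 0, S > 0 means coverage,
  I = infinity means no coverage).\<close>
definition covered :: "nat \<Rightarrow> (nat \<Rightarrow> real) \<Rightarrow> (nat \<Rightarrow> real) \<Rightarrow> real \<Rightarrow> (nat \<Rightarrow> nat \<Rightarrow> 'a \<Rightarrow> loc) \<Rightarrow> (nat \<Rightarrow> 'a \<Rightarrow> enat) \<Rightarrow>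
    (nat \<Rightarrow> nat \<Rightarrow> 'a \<Rightarrow> real) \<Rightarrow> (nat \<Rightarrow> nat \<Rightarrow> 'a \<Rightarrow> real) \<Rightarrow> 'a \<Rightarrow> bool" where
  "covered K P \<beta> \<alpha> pt N h g w \<longleftrightarrow>
     (\<exists>k\<in>{1..K}. \<exists>i. enat i < N k w \<and>
        ennreal (\<beta> k) * interference K P \<alpha> pt N g k i w < ennreal (P k * h k i w * norm (pt k i w) powr (- \<alpha>)))"

definition coverage_prob :: "'a measure \<Rightarrow> nat \<Rightarrow> (nat \<Rightarrow> real) \<Rightarrow> (nat \<Rightarrow> real) \<Rightarrow> real \<Rightarrow> (nat \<Rightarrow> nat \<Rightarrow> 'a \<Rightarrow> loc) \<Rightarrow> (nat \<Rightarrow> 'a \<Rightarrow> enat) \<Rightarrow>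
    (nat \<Rightarrow> nat \<Rightarrow> 'a \<Rightarrow> real) \<Rightarrow> (nat \<Rightarrow> nat \<Rightarrow> 'a \<Rightarrow> real) \<Rightarrow> real" where
  "coverage_prob M K P \<beta> \<alpha> pt N h g = measure M {w \<in> space M. covered K P \<beta> \<alpha> pt N h g w}"

end

theory Submission
  imports Defs
begin

text \<open>Negate the interfering-link gains, so that the marks form a vector Z = (h, -g) of independent
  coordinates, independent of the base station configuration, and coverage is an event that is
  increasing in Z. Replacing each coordinate of Z by a stochastically larger one, one at a time,
  can therefore only increase the coverage probability. Since Gamma(a,1) increases stochastically
  with a, coverage improves with larger Delta_k and smaller Psi_k: SU-BF (Delta = M, Psi = 1)
  beats SISO (1, 1), which beats full SDMA (1, M). Coverage involves infinitely many marks, so it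
  is written as a countable union of decreasing intersections of events depending on finitely many
  marks, and the finite-dimensional comparison passes to the limit.\<close>

section \<open>Stochastic dominance for increasing events\<close>

lemma upward_closed_real_cases:
  fixes U :: "real set"
  assumes up: "\<And>x y. x \<in> U \<Longrightarrow> x \<le> y \<Longrightarrow> y \<in> U"
  obtains "U = {}" | "U = UNIV" | c where "U = {c<..}" | c where "U = {c..}"
proof (cases "U = {} \<or> U = UNIV")
  case True
  then show ?thesis using that by blast
next
  case False
  then obtain u z where u: "u \<in> U" and z: "z \<notin> U" by auto
  have bdd: "bdd_below U"
    using z up by (intro bdd_belowI[of _ z]) (meson nle_le)
  have Inf_le: "Inf U \<le> v" if "v \<in> U" for v
    using that bdd by (rule cInf_lower)
  have greater: "v \<in> U" if "Inf U < v" for v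
    using cInf_lessD[of U v] u that up by fastforce
  show ?thesis
  proof (cases "Inf U \<in> U")
    case True
    then have "U = {Inf U..}" using Inf_le up by auto
    then show ?thesis using that by blast
  next
    case False
    then have "U = {Inf U<..}" using Inf_le greater by (auto simp: order.order_iff_strict)
    then show ?thesis using that by blast
  qed
qed

lemma emeasure_atLeast_le_if_greaterThan_le:
  fixes \<mu> \<nu> :: "real measure"
  assumes "finite_measure \<mu>" "finite_measure \<nu>" and "sets \<mu> = sets borel" and "sets \<nu> = sets borel"
    and dom: "\<And>a. emeasure \<nu> {a<..} \<le> emeasure \<mu> {a<..}"
  shows "emeasure \<nu> {c..} \<le> emeasure \<mu> {c..}"
proof -
  define A where "A n = {c - 1 / Suc n<..}" for n :: nat
  have "decseq A"
    unfolding A_def decseq_def by (auto simp: frac_le)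
  have "(\<Inter>n. A n) = {c..}"
  proof (intro equalityI subsetI)
    fix x assume x: "x \<in> (\<Inter>n. A n)"
    show "x \<in> {c..}"
    proof (rule ccontr)
      assume "x \<notin> {c..}"
      then obtain n where "inverse (Suc n) < c - x"
        using reals_Archimedean[of "c - x"] by auto
      moreover have "c - inverse (Suc n) < x"
        using x by (simp add: A_def inverse_eq_divide)
      ultimately show False by linarith
    qed
  qed (auto simp: A_def intro: less_le_trans[of _ c])
  moreover have "range A \<subseteq> sets \<mu>" "range A \<subseteq> sets \<nu>"
    using assms by (auto simp: A_def)
  ultimately have "emeasure \<mu> {c..} = (INF n. emeasure \<mu> (A n))"
    "emeasure \<nu> {c..} = (INF n. emeasure \<nu> (A n))"
    using \<open>decseq A\<close> assms(1,2)
    by (simp_all add: INF_emeasure_decseq finite_measure.emeasure_finite)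
  then show ?thesis
    using dom by (auto simp: A_def intro: INF_mono)
qed

lemma emeasure_upward_closed_le:
  fixes \<mu> \<nu> :: "real measure"
  assumes "prob_space \<mu>" "prob_space \<nu>" and "sets \<mu> = sets borel" "sets \<nu> = sets borel"
    and dom: "\<And>a. emeasure \<nu> {a<..} \<le> emeasure \<mu> {a<..}"
    and up: "\<And>x y. x \<in> U \<Longrightarrow> x \<le> y \<Longrightarrow> y \<in> U"
  shows "emeasure \<nu> U \<le> emeasure \<mu> U"
proof (rule upward_closed_real_cases[OF up])
  assume "U = UNIV"
  moreover have "space \<mu> = UNIV" "space \<nu> = UNIV"
    using assms(3,4) by (auto dest: sets_eq_imp_space_eq)
  ultimately show ?thesis
    using prob_space.emeasure_space_1[OF assms(1)] prob_space.emeasure_space_1[OF assms(2)] by simp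
next
  fix c assume "U = {c..}"
  then show ?thesis
    using assms(1-4) dom
    by (simp add: emeasure_atLeast_le_if_greaterThan_le prob_space.finite_measure)
qed (use dom in auto)

definition upward_closed :: "'i set \<Rightarrow> ('i \<Rightarrow> real) set \<Rightarrow> bool" where
  "upward_closed F S \<longleftrightarrow>
     (\<forall>y\<in>S. \<forall>y'\<in>space (PiM F (\<lambda>_. borel)). (\<forall>m\<in>F. y m \<le> y' m) \<longrightarrow> y' \<in> S)"

lemma (in product_sigma_finite) emeasure_PiM_insert_eq_sections:
  assumes "finite F" "i \<notin> F" and S: "S \<in> sets (PiM (insert i F) M)"
  shows "emeasure (PiM (insert i F) M) S =
    (\<integral>\<^sup>+ x. emeasure (M i) {y \<in> space (M i). x(i := y) \<in> S} \<partial>PiM F M)"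
proof -
  have "emeasure (PiM (insert i F) M) S = (\<integral>\<^sup>+ x. indicator S x \<partial>PiM (insert i F) M)"
    using S by simp
  also have "\<dots> = (\<integral>\<^sup>+ x. (\<integral>\<^sup>+ y. indicator S (x(i := y)) \<partial>M i) \<partial>PiM F M)"
    using S assms by (intro product_nn_integral_insert) auto
  also have "\<dots> = (\<integral>\<^sup>+ x. emeasure (M i) {y \<in> space (M i). x(i := y) \<in> S} \<partial>PiM F M)"
  proof (rule nn_integral_cong)
    fix x assume x: "x \<in> space (PiM F M)"
    have "(\<lambda>y. x(i := y)) -` S \<inter> space (M i) \<in> sets (M i)"
      using measurable_component_update[OF x \<open>i \<notin> F\<close>] S by (rule measurable_sets)
    then show "(\<integral>\<^sup>+ y. indicator S (x(i := y)) \<partial>M i) = emeasure (M i) {y \<in> space (M i). x(i := y) \<in> S}"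
      by (simp add: vimage_def Int_def conj_commute flip: nn_integral_indicator)
        (intro nn_integral_cong, simp split: split_indicator)
  qed
  finally show ?thesis .
qed

lemma emeasure_PiM_upward_closed_le_update:
  fixes \<rho> :: "'i \<Rightarrow> real measure" and \<mu> \<nu> :: "real measure"
  assumes "finite F" "i \<in> F"
    and \<rho>: "\<And>m. prob_space (\<rho> m)" "\<And>m. sets (\<rho> m) = sets borel"
    and \<mu>: "prob_space \<mu>" "sets \<mu> = sets borel" and \<nu>: "prob_space \<nu>" "sets \<nu> = sets borel"
    and dom: "\<And>a. emeasure \<nu> {a<..} \<le> emeasure \<mu> {a<..}"
    and S: "S \<in> sets (PiM F (\<lambda>_. borel))" and up: "upward_closed F S"
  shows "emeasure (PiM F (\<rho>(i := \<nu>))) S \<le> emeasure (PiM F (\<rho>(i := \<mu>))) S"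
proof -
  define F' where "F' = F - {i}"
  have F: "F = insert i F'" "i \<notin> F'" "finite F'"
    using assms(1,2) by (auto simp: F'_def)
  have sections: "emeasure (PiM F (\<rho>(i := \<tau>))) S = (\<integral>\<^sup>+ x. emeasure \<tau> {y. x(i := y) \<in> S} \<partial>PiM F' \<rho>)"
    if \<tau>: "prob_space \<tau>" "sets \<tau> = sets borel" for \<tau>
  proof -
    interpret product_sigma_finite "\<rho>(i := \<tau>)"
      using \<rho> \<tau> by (simp add: product_sigma_finite_def prob_space_imp_sigma_finite)
    have "sets (PiM F (\<rho>(i := \<tau>))) = sets (PiM F (\<lambda>_. borel))"
      using \<rho> \<tau> by (intro sets_PiM_cong) auto
    then have "S \<in> sets (PiM (insert i F') (\<rho>(i := \<tau>)))"
      using S F(1) by simp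
    moreover have "PiM F' (\<rho>(i := \<tau>)) = PiM F' \<rho>"
      using F(2) by (intro PiM_cong) auto
    moreover have "space \<tau> = UNIV"
      using \<tau>(2) by (auto dest: sets_eq_imp_space_eq)
    ultimately show ?thesis
      using emeasure_PiM_insert_eq_sections[OF F(3,2)] F(1) by simp
  qed
  have "(\<integral>\<^sup>+ x. emeasure \<nu> {y. x(i := y) \<in> S} \<partial>PiM F' \<rho>) \<le>
      (\<integral>\<^sup>+ x. emeasure \<mu> {y. x(i := y) \<in> S} \<partial>PiM F' \<rho>)"
  proof (rule nn_integral_mono)
    fix x assume x: "x \<in> space (PiM F' \<rho>)"
    show "emeasure \<nu> {y. x(i := y) \<in> S} \<le> emeasure \<mu> {y. x(i := y) \<in> S}"
    proof (rule emeasure_upward_closed_le[OF \<mu>(1) \<nu>(1) \<mu>(2) \<nu>(2) dom])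
      fix a b assume "a \<in> {y. x(i := y) \<in> S}" "a \<le> b"
      moreover have "x(i := b) \<in> space (PiM F (\<lambda>_. borel))"
        using x F(1) by (auto simp: space_PiM PiE_iff extensional_def)
      ultimately show "b \<in> {y. x(i := y) \<in> S}"
        using up unfolding upward_closed_def by (auto dest!: bspec[of _ _ "x(i := a)"])
    qed
  qed
  then show ?thesis
    using sections \<mu> \<nu> by simp
qed

lemma emeasure_PiM_upward_closed_le:
  fixes \<mu> \<nu> :: "'i \<Rightarrow> real measure"
  assumes "finite F"
    and \<mu>: "\<And>m. m \<in> F \<Longrightarrow> prob_space (\<mu> m)" "\<And>m. m \<in> F \<Longrightarrow> sets (\<mu> m) = sets borel"
    and \<nu>: "\<And>m. m \<in> F \<Longrightarrow> prob_space (\<nu> m)" "\<And>m. m \<in> F \<Longrightarrow> sets (\<nu> m) = sets borel"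
    and dom: "\<And>m a. m \<in> F \<Longrightarrow> emeasure (\<nu> m) {a<..} \<le> emeasure (\<mu> m) {a<..}"
    and S: "S \<in> sets (PiM F (\<lambda>_. borel))" and up: "upward_closed F S"
  shows "emeasure (PiM F \<nu>) S \<le> emeasure (PiM F \<mu>) S"
proof -
  \<comment> \<open>the laws are switched from \<mu> to \<nu> one coordinate at a time\<close>
  define hybrid where
    "hybrid G m = (if m \<in> G then \<nu> m else if m \<in> F then \<mu> m else return borel 0)" for G m
  have hybrid: "prob_space (hybrid G m)" "sets (hybrid G m) = sets borel" if "G \<subseteq> F" for G m
    using that \<mu> \<nu> by (auto simp: hybrid_def prob_space_return)
  have "emeasure (PiM F (hybrid G)) S \<le> emeasure (PiM F \<mu>) S" if "G \<subseteq> F" for G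
    using finite_subset[OF that \<open>finite F\<close>] that
  proof (induction G rule: finite_induct)
    case empty
    have "PiM F (hybrid {}) = PiM F \<mu>"
      by (intro PiM_cong) (auto simp: hybrid_def)
    then show ?case by simp
  next
    case (insert i G)
    have "emeasure (PiM F ((hybrid G)(i := \<nu> i))) S \<le> emeasure (PiM F ((hybrid G)(i := \<mu> i))) S"
      using insert.prems \<mu> \<nu> dom S up hybrid
      by (intro emeasure_PiM_upward_closed_le_update \<open>finite F\<close>) auto
    moreover have "(hybrid G)(i := \<nu> i) = hybrid (insert i G)" "(hybrid G)(i := \<mu> i) = hybrid G"
      using insert.hyps(2) insert.prems by (auto simp: hybrid_def)
    ultimately have "emeasure (PiM F (hybrid (insert i G))) S \<le> emeasure (PiM F (hybrid G)) S"
      by simp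
    also have "\<dots> \<le> emeasure (PiM F \<mu>) S"
      using insert by simp
    finally show ?case .
  qed
  moreover have "PiM F (hybrid F) = PiM F \<nu>"
    by (intro PiM_cong) (auto simp: hybrid_def)
  ultimately show ?thesis by (metis order_refl)
qed

lemma (in prob_space) distr_pair_eq_pair_distr:
  assumes X: "random_variable MX X" and Y: "random_variable MY Y"
    and indep: "indep_set (sets (vimage_algebra (space M) X MX)) (sets (vimage_algebra (space M) Y MY))"
  shows "distr M (MX \<Otimes>\<^sub>M MY) (\<lambda>w. (X w, Y w)) = distr M MX X \<Otimes>\<^sub>M distr M MY Y"
proof (rule pair_measure_eqI[symmetric])
  show "sigma_finite_measure (distr M MX X)" "sigma_finite_measure (distr M MY Y)"
    using X Y by (auto intro!: prob_space_imp_sigma_finite prob_space_distr)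
  fix A B assume "A \<in> sets (distr M MX X)" "B \<in> sets (distr M MY Y)"
  then have A: "A \<in> sets MX" and B: "B \<in> sets MY" by auto
  have "(\<lambda>w. (X w, Y w)) -` (A \<times> B) \<inter> space M = (X -` A \<inter> space M) \<inter> (Y -` B \<inter> space M)"
    by auto
  moreover have "prob ((X -` A \<inter> space M) \<inter> (Y -` B \<inter> space M)) = prob (X -` A \<inter> space M) * prob (Y -` B \<inter> space M)"
    using indep A B by (intro indep_setD) (auto intro: in_vimage_algebra)
  ultimately show "emeasure (distr M MX X) A * emeasure (distr M MY Y) B =
      emeasure (distr M (MX \<Otimes>\<^sub>M MY) (\<lambda>w. (X w, Y w))) (A \<times> B)"
    using A B X Y by (simp add: emeasure_distr measurable_Pair emeasure_eq_measure ennreal_mult)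
qed simp

lemma (in prob_space) emeasure_pair_eq_integral_sections:
  fixes X :: "'a \<Rightarrow> 'x" and Z :: "'i \<Rightarrow> 'a \<Rightarrow> real"
  assumes "F \<noteq> {}" and Z: "\<And>m. m \<in> F \<Longrightarrow> random_variable borel (Z m)"
    and X: "random_variable MX X"
    and XZ: "indep_set (sets (vimage_algebra (space M) X MX))
      (sets (vimage_algebra (space M) (\<lambda>w. \<lambda>m\<in>F. Z m w) (PiM F (\<lambda>_. borel))))"
    and Z_indep: "indep_vars (\<lambda>_. borel) Z F"
    and C: "C \<in> sets (MX \<Otimes>\<^sub>M PiM F (\<lambda>_. borel))"
  shows "emeasure M {w \<in> space M. (X w, \<lambda>m\<in>F. Z m w) \<in> C} =
    (\<integral>\<^sup>+x. emeasure (PiM F (\<lambda>m. distr M borel (Z m))) (Pair x -` C) \<partial>distr M MX X)"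
proof -
  have ZF: "random_variable (PiM F (\<lambda>_. borel)) (\<lambda>w. \<lambda>m\<in>F. Z m w)"
    using Z by (rule measurable_restrict)
  interpret Z_law: prob_space "PiM F (\<lambda>m. distr M borel (Z m))"
    using Z by (intro prob_space_PiM prob_space_distr) auto
  have "emeasure M {w \<in> space M. (X w, \<lambda>m\<in>F. Z m w) \<in> C} =
      emeasure (distr M (MX \<Otimes>\<^sub>M PiM F (\<lambda>_. borel)) (\<lambda>w. (X w, \<lambda>m\<in>F. Z m w))) C"
    using X ZF C by (subst emeasure_distr) (auto simp: vimage_def Int_def conj_commute)
  also have "distr M (MX \<Otimes>\<^sub>M PiM F (\<lambda>_. borel)) (\<lambda>w. (X w, \<lambda>m\<in>F. Z m w)) =
      distr M MX X \<Otimes>\<^sub>M PiM F (\<lambda>m. distr M borel (Z m))"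
    using distr_pair_eq_pair_distr[OF X ZF XZ] Z_indep Z
      indep_vars_iff_distr_eq_PiM'[OF \<open>F \<noteq> {}\<close>, where M'="\<lambda>_. borel" and X=Z]
    by simp
  also have "emeasure (distr M MX X \<Otimes>\<^sub>M PiM F (\<lambda>m. distr M borel (Z m))) C =
      (\<integral>\<^sup>+x. emeasure (PiM F (\<lambda>m. distr M borel (Z m))) (Pair x -` C) \<partial>distr M MX X)"
  proof (rule Z_law.emeasure_pair_measure_alt)
    have "sets (PiM F (\<lambda>m. distr M borel (Z m))) = sets (PiM F (\<lambda>_. borel))"
      by (intro sets_PiM_cong) auto
    then show "C \<in> sets (distr M MX X \<Otimes>\<^sub>M PiM F (\<lambda>m. distr M borel (Z m)))"
      using C by (simp cong: sets_pair_measure_cong)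
  qed
  finally show ?thesis .
qed

lemma (in prob_space) prob_monotone_event_le:
  fixes X :: "'a \<Rightarrow> 'x" and Z Z' :: "'i \<Rightarrow> 'a \<Rightarrow> real"
  assumes "finite F" "F \<noteq> {}"
    and Z: "\<And>m. m \<in> F \<Longrightarrow> random_variable borel (Z m)"
    and Z': "\<And>m. m \<in> F \<Longrightarrow> random_variable borel (Z' m)"
    and X: "random_variable MX X"
    and XZ: "indep_set (sets (vimage_algebra (space M) X MX))
      (sets (vimage_algebra (space M) (\<lambda>w. \<lambda>m\<in>F. Z m w) (PiM F (\<lambda>_. borel))))"
    and XZ': "indep_set (sets (vimage_algebra (space M) X MX))
      (sets (vimage_algebra (space M) (\<lambda>w. \<lambda>m\<in>F. Z' m w) (PiM F (\<lambda>_. borel))))"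
    and Z_indep: "indep_vars (\<lambda>_. borel) Z F" and Z'_indep: "indep_vars (\<lambda>_. borel) Z' F"
    and dom: "\<And>m a. m \<in> F \<Longrightarrow> \<P>(w in M. a < Z' m w) \<le> \<P>(w in M. a < Z m w)"
    and Q: "Measurable.pred (MX \<Otimes>\<^sub>M PiM F (\<lambda>_. borel)) Q"
    and mono: "\<And>x y y'. Q (x, y) \<Longrightarrow> (\<And>m. y m \<le> y' m) \<Longrightarrow> Q (x, y')"
  shows "\<P>(w in M. Q (X w, \<lambda>m\<in>F. Z' m w)) \<le> \<P>(w in M. Q (X w, \<lambda>m\<in>F. Z m w))"
proof -
  let ?S = "MX \<Otimes>\<^sub>M PiM F (\<lambda>_. borel)"
  let ?C = "{p \<in> space ?S. Q p}"
  have C: "?C \<in> sets ?S"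
    using Q by (simp add: pred_def)
  have up: "upward_closed F (Pair x -` ?C)" for x
    unfolding upward_closed_def
  proof (intro ballI impI)
    fix y y' assume y: "y \<in> Pair x -` ?C" and y': "y' \<in> space (PiM F (\<lambda>_. borel))"
      and le: "\<forall>m\<in>F. y m \<le> y' m"
    have "y m \<le> y' m" for m
      using y y' le by (cases "m \<in> F") (auto simp: space_pair_measure space_PiM PiE_def extensional_def)
    then show "y' \<in> Pair x -` ?C"
      using y y' mono by (auto simp: space_pair_measure)
  qed
  have "emeasure M {w \<in> space M. (X w, \<lambda>m\<in>F. Z' m w) \<in> ?C} =
      (\<integral>\<^sup>+x. emeasure (PiM F (\<lambda>m. distr M borel (Z' m))) (Pair x -` ?C) \<partial>distr M MX X)"
    by (intro emeasure_pair_eq_integral_sections[OF \<open>F \<noteq> {}\<close> Z' X XZ' Z'_indep C])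
  also have "\<dots> \<le> (\<integral>\<^sup>+x. emeasure (PiM F (\<lambda>m. distr M borel (Z m))) (Pair x -` ?C) \<partial>distr M MX X)"
  proof (intro nn_integral_mono emeasure_PiM_upward_closed_le \<open>finite F\<close> sets_Pair1[OF C])
    fix m a assume "m \<in> F"
    then show "emeasure (distr M borel (Z' m)) {a<..} \<le> emeasure (distr M borel (Z m)) {a<..}"
      using dom[of m a] Z Z' by (simp add: emeasure_distr emeasure_eq_measure vimage_def Int_def conj_commute)
  qed (use Z Z' up in \<open>auto intro: prob_space_distr\<close>)
  also have "\<dots> = emeasure M {w \<in> space M. (X w, \<lambda>m\<in>F. Z m w) \<in> ?C}"
    by (rule emeasure_pair_eq_integral_sections[OF \<open>F \<noteq> {}\<close> Z X XZ Z_indep C, symmetric])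
  finally have "emeasure M {w \<in> space M. (X w, \<lambda>m\<in>F. Z' m w) \<in> ?C} \<le>
      emeasure M {w \<in> space M. (X w, \<lambda>m\<in>F. Z m w) \<in> ?C}" .
  moreover have "{w \<in> space M. Q (X w, \<lambda>m\<in>F. Y m w)} = {w \<in> space M. (X w, \<lambda>m\<in>F. Y m w) \<in> ?C}"
    if "\<And>m. m \<in> F \<Longrightarrow> random_variable borel (Y m)" for Y
    using measurable_space[OF measurable_Pair[OF X measurable_restrict[OF that]]] by auto
  ultimately show ?thesis
    using Z Z' by (simp add: emeasure_eq_measure)
qed

lemma UN_lessThan_INT_decseq:
  fixes D :: "nat \<Rightarrow> nat \<Rightarrow> 'a set"
  assumes dec: "\<And>n. decseq (D n)"
  shows "(\<Union>n<N. \<Inter>L. D n L) = (\<Inter>L. \<Union>n<N. D n L)"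
proof (intro equalityI subsetI)
  fix x assume x: "x \<in> (\<Inter>L. \<Union>n<N. D n L)"
  show "x \<in> (\<Union>n<N. \<Inter>L. D n L)"
  proof (rule ccontr)
    assume "x \<notin> (\<Union>n<N. \<Inter>L. D n L)"
    then have "\<forall>n\<in>{..<N}. \<exists>L. x \<notin> D n L"
      by blast
    then obtain f where f: "\<And>n. n < N \<Longrightarrow> x \<notin> D n (f n)"
      by (metis lessThan_iff)
    have "x \<notin> D n (Max (f ` {..<N}))" if "n < N" for n
    proof -
      have "f n \<le> Max (f ` {..<N})"
        using that by (intro Max_ge) auto
      then show ?thesis
        using f[OF that] dec[of n] by (auto simp: decseq_def)
    qed
    then show False
      using x by blast
  qed
qed blast

lemma (in finite_measure) measure_UN_INT_decseq_le:
  fixes D D' :: "nat \<Rightarrow> nat \<Rightarrow> 'a set"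
  assumes "\<And>n L. D n L \<in> sets M" "\<And>n L. D' n L \<in> sets M"
    and "\<And>n. decseq (D n)" "\<And>n. decseq (D' n)"
    and le: "\<And>N L. measure M (\<Union>n<N. D' n L) \<le> measure M (\<Union>n<N. D n L)"
  shows "measure M (\<Union>n. \<Inter>L. D' n L) \<le> measure M (\<Union>n. \<Inter>L. D n L)"
proof -
  have finite_unions: "(\<lambda>L. measure M (\<Union>n<N. E n L)) \<longlonglongrightarrow> measure M (\<Union>n<N. \<Inter>L. E n L)"
    if "\<And>n L. E n L \<in> sets M" "\<And>n. decseq (E n)" for E :: "nat \<Rightarrow> nat \<Rightarrow> 'a set" and N
  proof -
    have "decseq (\<lambda>L. \<Union>n<N. E n L)"
      using that(2) unfolding decseq_def by blast
    then show ?thesis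
      using that unfolding UN_lessThan_INT_decseq[OF that(2)]
      by (intro finite_Lim_measure_decseq) auto
  qed
  have unions: "(\<lambda>N. measure M (\<Union>n<N. \<Inter>L. E n L)) \<longlonglongrightarrow> measure M (\<Union>n. \<Inter>L. E n L)"
    if "\<And>n L. E n L \<in> sets M" for E :: "nat \<Rightarrow> nat \<Rightarrow> 'a set"
  proof -
    have "(\<lambda>N. measure M (\<Union>n<N. \<Inter>L. E n L)) \<longlonglongrightarrow> measure M (\<Union>N. \<Union>n<N. \<Inter>L. E n L)"
      using that by (intro finite_Lim_measure_incseq) (auto simp: incseq_def intro: less_le_trans)
    moreover have "(\<Union>N. \<Union>n<N. \<Inter>L. E n L) = (\<Union>n. \<Inter>L. E n L)"
      by blast
    ultimately show ?thesis by simp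
  qed
  have "measure M (\<Union>n<N. \<Inter>L. D' n L) \<le> measure M (\<Union>n<N. \<Inter>L. D n L)" for N
    using assms by (intro LIMSEQ_le[OF finite_unions finite_unions]) auto
  then show ?thesis
    using assms by (intro LIMSEQ_le[OF unions unions]) auto
qed

section \<open>Independence of the signed marks\<close>

text \<open>Interfering-link gains enter with a minus sign, so that coverage is increasing in every
  coordinate of the mark vector.\<close>

definition signed_mark :: "(nat \<Rightarrow> nat \<Rightarrow> 'a \<Rightarrow> real) \<Rightarrow> (nat \<Rightarrow> nat \<Rightarrow> 'a \<Rightarrow> real) \<Rightarrow>
    nat \<times> nat \<times> bool \<Rightarrow> 'a \<Rightarrow> real" where
  "signed_mark h g = (\<lambda>(k, i, b) w. if b then h k i w else - g k i w)"

lemma signed_mark_measurable_vimage_algebra: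
  "signed_mark h g m \<in> measurable (vimage_algebra \<Omega> (mark_family h g m) borel) borel"
proof -
  have "signed_mark h g m = (\<lambda>w. (if snd (snd m) then 1 else -1) * mark_family h g m w)"
    by (auto simp: signed_mark_def mark_family_def split: prod.split)
  moreover have "mark_family h g m \<in> measurable (vimage_algebra \<Omega> (mark_family h g m) borel) borel"
    by (rule measurable_vimage_algebra1) simp
  ultimately show ?thesis
    by (simp only:) (intro borel_measurable_times borel_measurable_const)
qed

lemma sets_vimage_algebra_restrict_subset:
  assumes "\<And>m. m \<in> F \<Longrightarrow> Z m \<in> \<Omega> \<rightarrow> space (M m)"
  shows "sets (vimage_algebra \<Omega> (\<lambda>w. \<lambda>m\<in>F. Z m w) (PiM F M)) \<subseteq>
    sigma_sets \<Omega> (\<Union>m\<in>F. sets (vimage_algebra \<Omega> (Z m) (M m)))"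
proof -
  define G where "G = sigma \<Omega> (\<Union>m\<in>F. sets (vimage_algebra \<Omega> (Z m) (M m)))"
  have generators: "(\<Union>m\<in>F. sets (vimage_algebra \<Omega> (Z m) (M m))) \<subseteq> Pow \<Omega>"
    using sets.space_closed[of "vimage_algebra \<Omega> (Z _) (M _)"] by auto
  have sets_G: "sets G = sigma_sets \<Omega> (\<Union>m\<in>F. sets (vimage_algebra \<Omega> (Z m) (M m)))"
    and space_G: "space G = \<Omega>"
    using generators unfolding G_def by (simp_all add: sets_measure_of space_measure_of)
  have "Z m \<in> measurable G (M m)" if "m \<in> F" for m
  proof (rule subsetD[OF measurable_mono measurable_vimage_algebra1[OF assms[OF that]]])
    show "sets (vimage_algebra \<Omega> (Z m) (M m)) \<subseteq> sets G"
      using that unfolding sets_G by auto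
  qed (simp_all add: space_G)
  then have "(\<lambda>w. \<lambda>m\<in>F. Z m w) \<in> measurable G (PiM F M)"
    by (rule measurable_restrict)
  then show ?thesis
    by (rule sets_image_in_sets[OF space_G, unfolded sets_G])
qed

lemma sets_vimage_signed_mark_subset:
  "sets (vimage_algebra \<Omega> (signed_mark h g m) borel) \<subseteq> sets (vimage_algebra \<Omega> (mark_family h g m) borel)"
  by (rule sets_image_in_sets[OF _ signed_mark_measurable_vimage_algebra]) simp

lemma (in prob_space) indep_sets_image_index:
  assumes "inj_on f I" and indep: "indep_sets A (f ` I)"
  shows "indep_sets (\<lambda>i. A (f i)) I"
proof (rule indep_setsI)
  show "A (f i) \<subseteq> events" if "i \<in> I" for i
    using indep that by (auto simp: indep_sets_def)
next
  fix X J assume J: "J \<noteq> {}" "J \<subseteq> I" "finite J" and X: "\<forall>j\<in>J. X j \<in> A (f j)"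
  have inj: "inj_on f J"
    using \<open>inj_on f I\<close> J(2) by (rule inj_on_subset)
  have "prob (\<Inter>j\<in>f ` J. X (the_inv_into J f j)) = (\<Prod>j\<in>f ` J. prob (X (the_inv_into J f j)))"
    using J X inj by (intro indep_setsD[OF indep]) (auto simp: the_inv_into_f_f)
  then show "prob (\<Inter>j\<in>J. X j) = (\<Prod>j\<in>J. prob (X j))"
    using inj by (simp add: prod.reindex the_inv_into_f_f)
qed

lemma marks_signed_mark_measurable:
  assumes "marks M K pt N Delta Psi h g" and "m \<in> mark_index K"
  shows "signed_mark h g m \<in> borel_measurable M"
proof -
  obtain k i b where m: "m = (k, i, b)" and k: "k \<in> {1..K}"
    using assms(2) by (auto simp: mark_index_def)
  have "distributed M lborel (h k i) (gamma_density (Delta k))"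
    "distributed M lborel (g k i) (gamma_density (Psi k))"
    using assms(1) k by (simp_all add: marks_def)
  then have "h k i \<in> borel_measurable M" "g k i \<in> borel_measurable M"
    by (metis distributed_measurable measurable_lborel1)+
  then show ?thesis
    by (simp add: m signed_mark_def)
qed

lemma marks_indep_vars:
  assumes "prob_space M" and marks: "marks M K pt N Delta Psi h g" and "F \<subseteq> mark_index K"
  shows "prob_space.indep_vars M (\<lambda>_. borel) (signed_mark h g) F"
proof -
  interpret prob_space M by fact
  have "indep_sets (\<lambda>j. case j of None \<Rightarrow> sets (vimage_algebra (space M) (proc K pt N) (proc_space K))
        | Some m \<Rightarrow> sets (vimage_algebra (space M) (mark_family h g m) borel)) (Some ` F)"
    using \<open>F \<subseteq> mark_index K\<close>
    by (intro indep_sets_mono_index[OF _ marks[unfolded marks_def, THEN conjunct2, THEN conjunct2]]) auto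
  from indep_sets_image_index[OF _ this]
  have "indep_sets (\<lambda>m. sets (vimage_algebra (space M) (mark_family h g m) borel)) F"
    by (simp add: inj_on_def)
  moreover have "{signed_mark h g m -` A \<inter> space M |A. A \<in> sets borel} \<subseteq>
      sets (vimage_algebra (space M) (mark_family h g m) borel)" for m
    using sets_vimage_signed_mark_subset[of "space M" h g m] by (simp add: sets_vimage_algebra2)
  ultimately have "indep_sets (\<lambda>m. {signed_mark h g m -` A \<inter> space M |A. A \<in> sets borel}) F"
    by (rule indep_sets_mono_sets)
  then show ?thesis
    using marks_signed_mark_measurable[OF marks] \<open>F \<subseteq> mark_index K\<close>
    by (auto simp: indep_vars_def2)
qed

lemma marks_indep_set_proc:
  assumes "prob_space M" and marks: "marks M K pt N Delta Psi h g" and "F \<subseteq> mark_index K"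
  shows "prob_space.indep_set M (sets (vimage_algebra (space M) (proc K pt N) (proc_space K)))
    (sets (vimage_algebra (space M) (\<lambda>w. \<lambda>m\<in>F. signed_mark h g m w) (PiM F (\<lambda>_. borel))))"
proof -
  interpret prob_space M by fact
  define E where "E = (\<lambda>j. case j of None \<Rightarrow> sets (vimage_algebra (space M) (proc K pt N) (proc_space K))
    | Some m \<Rightarrow> sets (vimage_algebra (space M) (mark_family h g m) borel))"
  define I where "I b = (if b then {None} else Some ` F)" for b
  have "indep_sets E (\<Union>b. I b)"
    using \<open>F \<subseteq> mark_index K\<close>
    by (intro indep_sets_mono_index[OF _ marks[unfolded marks_def, THEN conjunct2, THEN conjunct2, folded E_def]]) (auto simp: I_def)
  then have indep: "indep_sets (\<lambda>b. sigma_sets (space M) (\<Union>j\<in>I b. E j)) UNIV"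
  proof (rule indep_sets_collect_sigma)
    show "Int_stable (E j)" for j
      by (auto simp: E_def Int_stable_def split: option.split)
    show "disjoint_family_on I UNIV"
      by (auto simp: disjoint_family_on_def I_def)
  qed
  have "sets (vimage_algebra (space M) (\<lambda>w. \<lambda>m\<in>F. signed_mark h g m w) (PiM F (\<lambda>_. borel)))
      \<subseteq> sigma_sets (space M) (\<Union>m\<in>F. sets (vimage_algebra (space M) (signed_mark h g m) borel))"
    by (rule sets_vimage_algebra_restrict_subset) simp
  also have "\<dots> \<subseteq> sigma_sets (space M) (\<Union>m\<in>F. E (Some m))"
    by (intro sigma_sets_mono' UN_mono order_refl) (simp add: E_def sets_vimage_signed_mark_subset)
  also have "\<dots> = sigma_sets (space M) (\<Union>j\<in>I False. E j)"
    by (simp add: I_def)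
  finally have "sets (vimage_algebra (space M) (\<lambda>w. \<lambda>m\<in>F. signed_mark h g m w) (PiM F (\<lambda>_. borel)))
      \<subseteq> sigma_sets (space M) (\<Union>j\<in>I False. E j)" .
  moreover have "sets (vimage_algebra (space M) (proc K pt N) (proc_space K)) \<subseteq> sigma_sets (space M) (\<Union>j\<in>I True. E j)"
    by (auto simp: I_def E_def)
  ultimately show ?thesis
    unfolding indep_set_def by (intro indep_sets_mono_sets[OF indep]) (auto split: bool.split)
qed

section \<open>Coverage through finitely many marks\<close>

lemma proc_measurable:
  assumes "\<forall>k\<in>{1..K}. \<forall>i. pt k i \<in> borel_measurable M"
    and "\<forall>k\<in>{1..K}. N k \<in> measurable M (count_space UNIV)"
  shows "proc K pt N \<in> measurable M (proc_space K)"
  unfolding proc_def[abs_def] proc_space_def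
  using assms by (intro measurable_Pair measurable_restrict measurable_restrict[where I=UNIV, unfolded restrict_UNIV]) auto

type_synonym config = "(nat \<Rightarrow> nat \<Rightarrow> loc) \<times> (nat \<Rightarrow> enat)"

definition signal :: "(nat \<Rightarrow> real) \<Rightarrow> real \<Rightarrow> config \<Rightarrow> (nat \<times> nat \<times> bool \<Rightarrow> real) \<Rightarrow>
    nat \<Rightarrow> nat \<Rightarrow> ennreal" where
  "signal P \<alpha> x y k i = ennreal (P k * y (k, i, True) * norm (fst x k i) powr - \<alpha>)"

definition interference_upto :: "nat \<Rightarrow> (nat \<Rightarrow> real) \<Rightarrow> real \<Rightarrow> nat \<Rightarrow> config \<Rightarrow>
    (nat \<times> nat \<times> bool \<Rightarrow> real) \<Rightarrow> nat \<Rightarrow> nat \<Rightarrow> ennreal" where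
  "interference_upto K P \<alpha> L x y k i =
    (\<Sum>j\<in>{1..K}. \<Sum>l<L. if enat l < snd x j \<and> fst x j l \<noteq> fst x k i
       then ennreal (P j * - y (j, l, False) * norm (fst x j l) powr - \<alpha>) else 0)"

text \<open>A rational threshold r separating interference from signal turns coverage, a strict
  inequality involving infinite sums, into \<open>\<exists>e. \<forall>L.\<close> of conditions on finitely many marks.\<close>

definition coverage_witness :: "nat \<Rightarrow> (nat \<Rightarrow> real) \<Rightarrow> (nat \<Rightarrow> real) \<Rightarrow> real \<Rightarrow>
    nat \<times> nat \<times> rat \<Rightarrow> nat \<Rightarrow> config \<Rightarrow> (nat \<times> nat \<times> bool \<Rightarrow> real) \<Rightarrow> bool" where
  "coverage_witness K P \<beta> \<alpha> = (\<lambda>(k, i, r) L x y. k \<in> {1..K} \<and> enat i < snd x k \<and>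
     ennreal (\<beta> k) * interference_upto K P \<alpha> L x y k i \<le> ennreal (of_rat r) \<and>
     ennreal (of_rat r) < signal P \<alpha> x y k i)"

lemma interference_eq_SUP_interference_upto:
  assumes "k \<in> {1..K}"
  shows "interference K P \<alpha> pt N g k i w =
    (SUP L. interference_upto K P \<alpha> L (proc K pt N w) (\<lambda>m. signed_mark h g m w) k i)"
proof -
  have "interference K P \<alpha> pt N g k i w = (\<Sum>j\<in>{1..K}. SUP L. \<Sum>l<L.
      if enat l < N j w \<and> pt j l w \<noteq> pt k i w then ennreal (P j * g j l w * norm (pt j l w) powr - \<alpha>) else 0)"
    by (simp add: interference_def suminf_eq_SUP)
  also have "\<dots> = (SUP L. \<Sum>j\<in>{1..K}. \<Sum>l<L.
      if enat l < N j w \<and> pt j l w \<noteq> pt k i w then ennreal (P j * g j l w * norm (pt j l w) powr - \<alpha>) else 0)"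
    by (rule ennreal_SUP_sum[symmetric]) (auto intro: incseq_sumI)
  also have "\<dots> = (SUP L. interference_upto K P \<alpha> L (proc K pt N w) (\<lambda>m. signed_mark h g m w) k i)"
    unfolding interference_upto_def using assms
    by (intro SUP_cong sum.cong refl) (auto simp: proc_def signed_mark_def)
  finally show ?thesis .
qed

lemma covered_iff_coverage_witness:
  "covered K P \<beta> \<alpha> pt N h g w \<longleftrightarrow>
    (\<exists>e. \<forall>L. coverage_witness K P \<beta> \<alpha> e L (proc K pt N w) (\<lambda>m. signed_mark h g m w))"
proof -
  let ?x = "proc K pt N w" and ?y = "\<lambda>m. signed_mark h g m w"
  have signal: "signal P \<alpha> ?x ?y k i = ennreal (P k * h k i w * norm (pt k i w) powr - \<alpha>)"
    and count: "snd ?x k = N k w" if "k \<in> {1..K}" for k i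
    using that by (simp_all add: signal_def proc_def signed_mark_def)
  have interference_le: "ennreal (\<beta> k) * interference K P \<alpha> pt N g k i w \<le> c \<longleftrightarrow>
      (\<forall>L. ennreal (\<beta> k) * interference_upto K P \<alpha> L ?x ?y k i \<le> c)" if "k \<in> {1..K}" for k i c
    using that by (simp add: interference_eq_SUP_interference_upto[where h=h] SUP_mult_left_ennreal SUP_le_iff)
  show ?thesis
  proof
    assume "covered K P \<beta> \<alpha> pt N h g w"
    then obtain k i where k: "k \<in> {1..K}" "enat i < N k w"
      and "ennreal (\<beta> k) * interference K P \<alpha> pt N g k i w < ennreal (P k * h k i w * norm (pt k i w) powr - \<alpha>)"
      unfolding covered_def by blast
    then obtain r :: rat where
      "ennreal (\<beta> k) * interference K P \<alpha> pt N g k i w < of_rat r" "of_rat r < ennreal (P k * h k i w * norm (pt k i w) powr - \<alpha>)"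
      using ennreal_rat_dense by blast
    then have "ennreal (\<beta> k) * interference K P \<alpha> pt N g k i w \<le> of_rat r"
      "of_rat r < ennreal (P k * h k i w * norm (pt k i w) powr - \<alpha>)"
      by (simp_all add: less_imp_le)
    then have "\<forall>L. coverage_witness K P \<beta> \<alpha> (k, i, r) L ?x ?y"
      using k interference_le[OF k(1)] signal[OF k(1)] count[OF k(1)] by (auto simp: coverage_witness_def)
    then show "\<exists>e. \<forall>L. coverage_witness K P \<beta> \<alpha> e L ?x ?y" ..
  next
    assume "\<exists>e. \<forall>L. coverage_witness K P \<beta> \<alpha> e L ?x ?y"
    then obtain k i r where witness: "\<forall>L. coverage_witness K P \<beta> \<alpha> (k, i, r) L ?x ?y"
      by (metis prod_cases3)
    then have k: "k \<in> {1..K}"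
      by (simp add: coverage_witness_def)
    have "ennreal (\<beta> k) * interference K P \<alpha> pt N g k i w \<le> of_rat r"
      using witness interference_le[OF k] by (simp add: coverage_witness_def)
    moreover have "enat i < N k w" "of_rat r < ennreal (P k * h k i w * norm (pt k i w) powr - \<alpha>)"
      using witness signal[OF k] count[OF k] by (auto simp: coverage_witness_def)
    ultimately show "covered K P \<beta> \<alpha> pt N h g w"
      using k unfolding covered_def by (blast intro: le_less_trans)
  qed
qed

lemma interference_upto_mono:
  "L \<le> L' \<Longrightarrow> interference_upto K P \<alpha> L x y k i \<le> interference_upto K P \<alpha> L' x y k i"
  unfolding interference_upto_def by (intro sum_mono sum_mono2) auto

lemma coverage_witness_antimono:
  assumes "L \<le> L'" and "coverage_witness K P \<beta> \<alpha> e L' x y"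
  shows "coverage_witness K P \<beta> \<alpha> e L x y"
proof -
  obtain k i r where e: "e = (k, i, r)"
    by (metis prod_cases3)
  have "ennreal (\<beta> k) * interference_upto K P \<alpha> L x y k i \<le> ennreal (\<beta> k) * interference_upto K P \<alpha> L' x y k i"
    using assms(1) by (intro mult_left_mono interference_upto_mono) auto
  then show ?thesis
    using assms(2) by (auto simp: e coverage_witness_def)
qed

lemma coverage_witness_restrict:
  assumes "fst (snd e) < B" "L \<le> B"
  shows "coverage_witness K P \<beta> \<alpha> e L x (restrict y ({1..K} \<times> {..<B} \<times> UNIV)) \<longleftrightarrow>
    coverage_witness K P \<beta> \<alpha> e L x y"
proof -
  obtain k i r where e: "e = (k, i, r)"
    by (metis prod_cases3)
  let ?y = "restrict y ({1..K} \<times> {..<B} \<times> UNIV)"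
  have "interference_upto K P \<alpha> L x ?y k i = interference_upto K P \<alpha> L x y k i"
    unfolding interference_upto_def using assms(2) by (intro sum.cong refl) auto
  moreover have "signal P \<alpha> x ?y k i = signal P \<alpha> x y k i" if "k \<in> {1..K}"
    using that assms(1) by (simp add: e signal_def)
  ultimately show ?thesis
    by (auto simp: e coverage_witness_def)
qed

lemma coverage_witness_mono:
  assumes "\<forall>k\<in>{1..K}. 0 \<le> P k" and le: "\<And>m. y m \<le> y' m"
    and witness: "coverage_witness K P \<beta> \<alpha> e L x y"
  shows "coverage_witness K P \<beta> \<alpha> e L x y'"
proof -
  obtain k i r where e: "e = (k, i, r)"
    by (metis prod_cases3)
  have k: "k \<in> {1..K}"
    using witness by (simp add: e coverage_witness_def)
  have "interference_upto K P \<alpha> L x y' k i \<le> interference_upto K P \<alpha> L x y k i"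
    unfolding interference_upto_def using assms(1) le
    by (intro sum_mono) (auto intro!: ennreal_leI mult_right_mono mult_left_mono)
  moreover have "signal P \<alpha> x y k i \<le> signal P \<alpha> x y' k i"
    unfolding signal_def using assms(1) le k by (auto intro!: ennreal_leI mult_right_mono mult_left_mono)
  ultimately show ?thesis
    using witness unfolding e coverage_witness_def
    by (auto intro: order_trans[OF mult_left_mono] order.strict_trans2)
qed

lemma proc_space_components_measurable:
  assumes "j \<in> {1..K}"
  shows "(\<lambda>x. fst x j l) \<in> borel_measurable (proc_space K)"
    and "(\<lambda>x. snd x j) \<in> measurable (proc_space K) (count_space UNIV)"
proof -
  have "(\<lambda>q. q j) \<in> measurable (PiM {1..K} (\<lambda>_. PiM UNIV (\<lambda>_. borel))) (PiM UNIV (\<lambda>_. borel))"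
    using assms by (rule measurable_component_singleton)
  from measurable_compose[OF this measurable_component_singleton[of l UNIV]]
  show "(\<lambda>x. fst x j l) \<in> borel_measurable (proc_space K)"
    unfolding proc_space_def by (intro measurable_compose[OF measurable_fst]) simp
  have "(\<lambda>q. q j) \<in> measurable (PiM {1..K} (\<lambda>_. count_space UNIV)) (count_space UNIV)"
    using assms by (rule measurable_component_singleton)
  then show "(\<lambda>x. snd x j) \<in> measurable (proc_space K) (count_space UNIV)"
    unfolding proc_space_def by (rule measurable_compose[OF measurable_snd])
qed

lemma measurable_coverage_witness:
  assumes "fst (snd e) < B" "L \<le> B"
  shows "Measurable.pred (proc_space K \<Otimes>\<^sub>M PiM ({1..K} \<times> {..<B} \<times> UNIV) (\<lambda>_. borel))
    (\<lambda>p. coverage_witness K P \<beta> \<alpha> e L (fst p) (snd p))"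
proof -
  obtain k i r where e: "e = (k, i, r)"
    by (metis prod_cases3)
  let ?S = "proc_space K \<Otimes>\<^sub>M PiM ({1..K} \<times> {..<B} \<times> UNIV) (\<lambda>_. borel)"
  have pts: "(\<lambda>p. fst (fst p) j l) \<in> borel_measurable ?S"
    "(\<lambda>p. snd (fst p) j) \<in> measurable ?S (count_space UNIV)" if "j \<in> {1..K}" for j l
    using proc_space_components_measurable[OF that] by (auto intro: measurable_compose[OF measurable_fst])
  have marks: "(\<lambda>p. snd p (j, l, b)) \<in> borel_measurable ?S" if "j \<in> {1..K}" "l < B" for j l b
    using that by (intro measurable_compose[OF measurable_snd measurable_component_singleton]) simp
  show ?thesis
  proof (cases "k \<in> {1..K}")
    case True
    have "(\<lambda>p. if enat l < snd (fst p) j \<and> fst (fst p) j l \<noteq> fst (fst p) k i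
        then ennreal (P j * - snd p (j, l, False) * norm (fst (fst p) j l) powr - \<alpha>) else 0) \<in> borel_measurable ?S"
      if "j \<in> {1..K}" "l < L" for j l
    proof -
      have "l < B"
        using that(2) assms(2) by simp
      note [measurable] = pts[OF that(1)] pts[OF True] marks[OF that(1) this]
      show ?thesis by measurable
    qed
    then have [measurable]: "(\<lambda>p. interference_upto K P \<alpha> L (fst p) (snd p) k i) \<in> borel_measurable ?S"
      unfolding interference_upto_def by (intro borel_measurable_sum) auto
    have [measurable]: "(\<lambda>p. signal P \<alpha> (fst p) (snd p) k i) \<in> borel_measurable ?S"
    proof -
      note [measurable] = pts[OF True] marks[OF True assms(1)[unfolded e, simplified]]
      show ?thesis unfolding signal_def by measurable
    qed
    note [measurable] = pts[OF True]
    show ?thesis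
      unfolding e coverage_witness_def prod.case by measurable
  next
    case False
    then have "(\<lambda>p. coverage_witness K P \<beta> \<alpha> e L (fst p) (snd p)) = (\<lambda>_. False)"
      by (auto simp: e coverage_witness_def)
    then show ?thesis
      by (simp add: pred_def)
  qed
qed

lemma coverage_witness_event_measurable:
  assumes proc: "proc K pt N \<in> measurable M (proc_space K)" and marks: "marks M K pt N Delta Psi h g"
  shows "{w \<in> space M. coverage_witness K P \<beta> \<alpha> e L (proc K pt N w) (\<lambda>m. signed_mark h g m w)} \<in> sets M"
proof -
  define F where "F = {1..K} \<times> {..<fst (snd e) + L + 1} \<times> (UNIV :: bool set)"
  have map: "(\<lambda>w. (proc K pt N w, \<lambda>m\<in>F. signed_mark h g m w)) \<in> measurable M (proc_space K \<Otimes>\<^sub>M PiM F (\<lambda>_. borel))"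
    using proc marks_signed_mark_measurable[OF marks]
    by (intro measurable_Pair measurable_restrict) (auto simp: F_def mark_index_def)
  have "Measurable.pred (proc_space K \<Otimes>\<^sub>M PiM F (\<lambda>_. borel))
      (\<lambda>p. coverage_witness K P \<beta> \<alpha> e L (fst p) (snd p))"
    unfolding F_def by (rule measurable_coverage_witness) auto
  from measurable_compose[OF map this] have "Measurable.pred M
      (\<lambda>w. coverage_witness K P \<beta> \<alpha> e L (proc K pt N w) (\<lambda>m\<in>F. signed_mark h g m w))"
    by (simp only: fst_conv snd_conv)
  then show ?thesis
    using coverage_witness_restrict[of e "fst (snd e) + L + 1" L] by (simp add: F_def pred_def)
qed

section \<open>Comparison of coverage probabilities\<close>

lemma prob_coverage_witness_le:
  assumes "prob_space M" and "K \<ge> 1" and P: "\<forall>k\<in>{1..K}. 0 \<le> P k"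
    and proc: "proc K pt N \<in> measurable M (proc_space K)"
    and marks: "marks M K pt N Delta Psi h g" and marks': "marks M K pt N Delta' Psi' h' g'"
    and dom: "\<And>m a. m \<in> mark_index K \<Longrightarrow>
      \<P>(w in M. a < signed_mark h' g' m w) \<le> \<P>(w in M. a < signed_mark h g m w)"
  shows "\<P>(w in M. \<exists>n<n0. coverage_witness K P \<beta> \<alpha> (from_nat n) L (proc K pt N w) (\<lambda>m. signed_mark h' g' m w))
    \<le> \<P>(w in M. \<exists>n<n0. coverage_witness K P \<beta> \<alpha> (from_nat n) L (proc K pt N w) (\<lambda>m. signed_mark h g m w))"
proof -
  interpret prob_space M by fact
  let ?i = "\<lambda>n. fst (snd (from_nat n :: nat \<times> nat \<times> rat))"
  obtain B where B: "\<forall>n<n0. ?i n < B" "L < B"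
    using finite_nat_set_iff_bounded[THEN iffD1, of "insert L (?i ` {..<n0})"] by auto
  define F where "F = {1..K} \<times> {..<B} \<times> (UNIV :: bool set)"
  define Q where "Q p = (\<exists>n\<in>{..<n0}. coverage_witness K P \<beta> \<alpha> (from_nat n) L (fst p) (snd p))" for p
  have F: "finite F" "F \<noteq> {}" "F \<subseteq> mark_index K"
    using \<open>K \<ge> 1\<close> B(2) by (auto simp: F_def mark_index_def)
  have restrict: "(\<exists>n<n0. coverage_witness K P \<beta> \<alpha> (from_nat n) L (proc K pt N w) (\<lambda>m. signed_mark h g m w))
      \<longleftrightarrow> Q (proc K pt N w, \<lambda>m\<in>F. signed_mark h g m w)" for h g w
    using coverage_witness_restrict[of "from_nat _" B L] B unfolding Q_def F_def by auto
  have "Measurable.pred (proc_space K \<Otimes>\<^sub>M PiM F (\<lambda>_. borel)) Q"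
    unfolding Q_def F_def using B by (intro pred_intros_finite(4) measurable_coverage_witness) auto
  moreover have "Q (x, y')" if "Q (x, y)" "\<And>m. y m \<le> y' m" for x y y'
    using that(1) coverage_witness_mono[OF P, where y=y and y'=y', OF that(2)]
    unfolding Q_def fst_conv snd_conv by blast
  ultimately show ?thesis
    unfolding restrict
    using F marks_signed_mark_measurable[OF marks] marks_signed_mark_measurable[OF marks'] proc
      marks_indep_set_proc[OF \<open>prob_space M\<close> marks F(3)] marks_indep_set_proc[OF \<open>prob_space M\<close> marks' F(3)]
      marks_indep_vars[OF \<open>prob_space M\<close> marks F(3)] marks_indep_vars[OF \<open>prob_space M\<close> marks' F(3)] dom
    by (intro prob_monotone_event_le) auto
qed

theorem coverage_prob_mono:
  assumes "prob_space M" and "K \<ge> 1" and "\<forall>k\<in>{1..K}. 0 \<le> P k"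
    and proc: "proc K pt N \<in> measurable M (proc_space K)"
    and marks: "marks M K pt N Delta Psi h g" and marks': "marks M K pt N Delta' Psi' h' g'"
    and "\<And>m a. m \<in> mark_index K \<Longrightarrow>
      \<P>(w in M. a < signed_mark h' g' m w) \<le> \<P>(w in M. a < signed_mark h g m w)"
  shows "coverage_prob M K P \<beta> \<alpha> pt N h' g' \<le> coverage_prob M K P \<beta> \<alpha> pt N h g"
proof -
  interpret prob_space M by fact
  define witness where "witness h g n L = {w \<in> space M.
    coverage_witness K P \<beta> \<alpha> (from_nat n) L (proc K pt N w) (\<lambda>m. signed_mark h g m w)}" for h g n L
  have ex_from_nat: "(\<exists>e :: nat \<times> nat \<times> rat. \<Phi> e) \<longleftrightarrow> (\<exists>n. \<Phi> (from_nat n))" for \<Phi>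
    by (metis from_nat_to_nat)
  have coverage_eq: "{w \<in> space M. covered K P \<beta> \<alpha> pt N h g w} = (\<Union>n. \<Inter>L. witness h g n L)" for h g
    unfolding witness_def covered_iff_coverage_witness ex_from_nat by blast
  have events: "witness h g n L \<in> events" if "marks M K pt N Delta Psi h g" for Delta Psi h g n L
    using coverage_witness_event_measurable[OF proc that] by (simp add: witness_def)
  have unions: "(\<Union>n<n0. witness h g n L) = {w \<in> space M.
      \<exists>n<n0. coverage_witness K P \<beta> \<alpha> (from_nat n) L (proc K pt N w) (\<lambda>m. signed_mark h g m w)}" for h g n0 L
    by (auto simp: witness_def)
  have "measure M (\<Union>n. \<Inter>L. witness h' g' n L) \<le> measure M (\<Union>n. \<Inter>L. witness h g n L)"
  proof (rule measure_UN_INT_decseq_le)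
    show "witness h g n L \<in> sets M" "witness h' g' n L \<in> sets M" for n L
      using events[OF marks] events[OF marks'] by auto
    show "decseq (witness h g n)" "decseq (witness h' g' n)" for n
      unfolding decseq_def witness_def by (auto intro: coverage_witness_antimono)
    show "measure M (\<Union>n<n0. witness h' g' n L) \<le> measure M (\<Union>n<n0. witness h g n L)" for n0 L
      unfolding unions by (rule prob_coverage_witness_le[OF assms])
  qed
  then show ?thesis
    unfolding coverage_prob_def coverage_eq .
qed

lemma erlang_CDF_antimono:
  assumes "k \<le> k'" "0 \<le> l"
  shows "erlang_CDF k' l x \<le> erlang_CDF k l x"
proof (cases "x < 0")
  case False
  have "(\<Sum>n\<le>k. (l * x) ^ n * exp (- l * x) / fact n) \<le> (\<Sum>n\<le>k'. (l * x) ^ n * exp (- l * x) / fact n)"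
    using assms False by (intro sum_mono2) auto
  then show ?thesis
    using False by (simp add: erlang_CDF_def)
qed (simp add: erlang_CDF_def)

lemma (in prob_space) gamma_prob_atMost:
  assumes "distributed M lborel X (gamma_density n)"
  shows "\<P>(w in M. X w \<le> b) = erlang_CDF (n - 1) 1 b"
proof -
  have "emeasure M {w \<in> space M. X w \<le> b} = (\<integral>\<^sup>+x. gamma_density n x * indicator {..b} x \<partial>lborel)"
    using distributed_emeasure[OF assms, of "{..b}"] by (simp add: vimage_def Int_def conj_commute)
  also have "\<dots> = erlang_CDF (n - 1) 1 b"
    by (simp add: gamma_density_def nn_integral_erlang_density)
  finally show ?thesis
    by (simp add: emeasure_eq_measure)
qed

lemma (in prob_space) gamma_prob_lessThan:
  assumes "distributed M lborel X (gamma_density n)"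
  shows "\<P>(w in M. X w < b) = erlang_CDF (n - 1) 1 b"
proof -
  have "emeasure M {w \<in> space M. X w < b} = (\<integral>\<^sup>+x. gamma_density n x * indicator {..<b} x \<partial>lborel)"
    using distributed_emeasure[OF assms, of "{..<b}"] by (simp add: vimage_def Int_def conj_commute)
  also have "\<dots> = (\<integral>\<^sup>+x. gamma_density n x * indicator {..b} x \<partial>lborel)"
    by (intro nn_integral_cong_AE eventually_mono[OF AE_lborel_singleton[of b]]) (auto split: split_indicator)
  also have "\<dots> = erlang_CDF (n - 1) 1 b"
    by (simp add: gamma_density_def nn_integral_erlang_density)
  finally show ?thesis
    by (simp add: emeasure_eq_measure)
qed

lemma prob_signed_mark_greaterThan:
  assumes "prob_space M" and marks: "marks M K pt N Delta Psi h g" and "k \<in> {1..K}"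
  shows "\<P>(w in M. a < signed_mark h g (k, i, True) w) = 1 - erlang_CDF (Delta k - 1) 1 a"
    and "\<P>(w in M. a < signed_mark h g (k, i, False) w) = erlang_CDF (Psi k - 1) 1 (- a)"
proof -
  interpret prob_space M by fact
  have h: "distributed M lborel (h k i) (gamma_density (Delta k))"
    and g: "distributed M lborel (g k i) (gamma_density (Psi k))"
    using marks \<open>k \<in> {1..K}\<close> by (simp_all add: marks_def)
  have "{w \<in> space M. a < h k i w} = space M - {w \<in> space M. h k i w \<le> a}"
    by auto
  then have "\<P>(w in M. a < h k i w) = 1 - \<P>(w in M. h k i w \<le> a)"
    using distributed_measurable[OF h] by (simp add: prob_compl)
  then show "\<P>(w in M. a < signed_mark h g (k, i, True) w) = 1 - erlang_CDF (Delta k - 1) 1 a"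
    by (simp add: signed_mark_def gamma_prob_atMost[OF h])
  have "{w \<in> space M. a < - g k i w} = {w \<in> space M. g k i w < - a}"
    by auto
  then show "\<P>(w in M. a < signed_mark h g (k, i, False) w) = erlang_CDF (Psi k - 1) 1 (- a)"
    by (simp add: signed_mark_def gamma_prob_lessThan[OF g])
qed

theorem coverage_prob_mono_channel:
  assumes "prob_space M" and "K \<ge> 1" and "\<forall>k\<in>{1..K}. 0 \<le> P k"
    and "point_processes M K pt N"
    and marks: "marks M K pt N Delta Psi h g" and marks': "marks M K pt N Delta' Psi' h' g'"
    and params: "\<forall>k\<in>{1..K}. Delta' k \<le> Delta k \<and> Psi k \<le> Psi' k"
  shows "coverage_prob M K P \<beta> \<alpha> pt N h' g' \<le> coverage_prob M K P \<beta> \<alpha> pt N h g"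
proof (rule coverage_prob_mono[OF assms(1-3) _ marks marks'])
  show "proc K pt N \<in> measurable M (proc_space K)"
    using \<open>point_processes M K pt N\<close> by (intro proc_measurable) (auto simp: point_processes_def)
next
  fix m a assume "m \<in> mark_index K"
  then obtain k i b where m: "m = (k, i, b)" and k: "k \<in> {1..K}"
    by (auto simp: mark_index_def)
  have "Delta' k \<le> Delta k" "Psi k \<le> Psi' k"
    using params k by auto
  then have "erlang_CDF (Delta k - 1) 1 a \<le> erlang_CDF (Delta' k - 1) 1 a"
    "erlang_CDF (Psi' k - 1) 1 (- a) \<le> erlang_CDF (Psi k - 1) 1 (- a)"
    by (intro erlang_CDF_antimono diff_le_mono; simp)+
  then show "\<P>(w in M. a < signed_mark h' g' m w) \<le> \<P>(w in M. a < signed_mark h g m w)"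
    using prob_signed_mark_greaterThan[OF \<open>prob_space M\<close> marks k]
      prob_signed_mark_greaterThan[OF \<open>prob_space M\<close> marks' k]
    by (cases b) (simp_all add: m)
qed

theorem corollary3:
  fixes M :: "'a measure"
    and K :: nat and P \<beta> :: "nat \<Rightarrow> real" and \<alpha> :: real
    and pt :: "nat \<Rightarrow> nat \<Rightarrow> 'a \<Rightarrow> real^2" and N :: "nat \<Rightarrow> 'a \<Rightarrow> enat"
    and Mant Mpp :: "nat \<Rightarrow> nat"
    and h1 g1 h2 g2 h3 g3 :: "nat \<Rightarrow> nat \<Rightarrow> 'a \<Rightarrow> real"
  assumes "prob_space M"
    and "K \<ge> 1"
    and "\<forall>k\<in>{1..K}. P k > 0 \<and> \<beta> k > 0"
    and "point_processes M K pt N"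
    and "\<forall>k\<in>{1..K}. Mant k > 1 \<and> Mpp k > 1"
    and SU_BF: "marks M K pt N Mant (\<lambda>_. 1) h1 g1"
    and SISO: "marks M K pt N (\<lambda>_. 1) (\<lambda>_. 1) h2 g2"
    and SDMA: "marks M K pt N (\<lambda>_. 1) Mpp h3 g3"
  shows "coverage_prob M K P \<beta> \<alpha> pt N h1 g1 \<ge> coverage_prob M K P \<beta> \<alpha> pt N h2 g2
       \<and> coverage_prob M K P \<beta> \<alpha> pt N h2 g2 \<ge> coverage_prob M K P \<beta> \<alpha> pt N h3 g3"
proof -
  have P: "\<forall>k\<in>{1..K}. 0 \<le> P k" and antennas: "\<forall>k\<in>{1..K}. 1 \<le> Mant k \<and> 1 \<le> Mpp k"
    using assms(3,5) by (auto simp: less_imp_le)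
  have "coverage_prob M K P \<beta> \<alpha> pt N h2 g2 \<le> coverage_prob M K P \<beta> \<alpha> pt N h1 g1"
    using antennas by (intro coverage_prob_mono_channel[OF assms(1,2) P assms(4) SU_BF SISO]) auto
  moreover have "coverage_prob M K P \<beta> \<alpha> pt N h3 g3 \<le> coverage_prob M K P \<beta> \<alpha> pt N h2 g2"
    using antennas by (intro coverage_prob_mono_channel[OF assms(1,2) P assms(4) SISO SDMA]) auto
  ultimately show ?thesis
    by simp
qed

end
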